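(* Let $\mathcal{T}$ be a single-elimination tournament, $\sigma$ a scoring system, $u\in V(\mathcal{T})$, $\mathcal{B}=\{B_1,\dots,B_r\}$ a set of brackets of $\mathcal{T}$, and $\widetilde{B}_i$ the restriction of $B_i$ to $V(\mathcal{T}_u)$. Suppose that: (a) $\{\widetilde{B}_1,\dots,\widetilde{B}_r\}$ is a $\sigma_u$-resolving set for $\mathcal{T}_u$; (b) $B_i(x)\notin P(u)$ for all $i$ and all $x\in M(\mathcal{T})\setminus V(\mathcal{T}_u)$; and (c) for every pair of brackets $B,B'$ of $\mathcal{T}$ with $\mathrm{score}_\sigma(B_i,B)=\mathrm{score}_\sigma(B_i,B')$ for all $i$, we have for all $a\in P(\mathcal{T})\setminus P(u)$ and all $x\in M(\mathcal{T})$ that $B(x)=a$ if and only if $B'(x)=a$. Then $\mathcal{B}$ is a $\sigma$-resolving set for $\mathcal{T}$.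
   Context: A single-elimination tournament is a finite directed graph $\mathcal{T}$ such that: (a) $\mathcal{T}$ has exactly one sink (vertex with no out-neighbours); (b) every non-sink vertex has exactly one out-neighbour; (c) $\mathcal{T}$ has no directed cycles; (d) $|N^-(v)|\ne 1$ for every vertex $v$, where $N^-(v)$ denotes the set of in-neighbours of $v$. The players $P(\mathcal{T})$ are the sources and the matches are $M(\mathcal{T})=V(\mathcal{T})\setminus P(\mathcal{T})$. For a vertex $u$, $P(u)$ is the set of players $a$ for which there is a directed walk from $a$ to $u$ (length $0$ allowed). For $u\in V(\mathcal{T})$, $\mathcal{T}_u$ is the digraph obtained from $\mathcal{T}$ by deleting every vertex $v$ with $P(v)\not\subseteq P(u)$ (it is a single-elimination tournament), and $\sigma_u$ is the restriction of $\sigma$ to $M(\mathcal{T})\cap V(\mathcal{T}_u)=M(\mathcal{T}_u)$. A bracket is a function $B:V(\mathcal{T})\to P(\mathcal{T})$ with $B(a)=a$ for every player $a$ and $B(x)\in\{B(u):u\in N^-(x)\}$ for every match $x$. A scoring system is any function $\sigma:M(\mathcal{T})\to\mathbb{R}_{>0}$. For brackets $B,B'$ let $\mathrm{score}_\sigma(B,B')=\sum_{x\in M(\mathcal{T}):\,B(x)=B'(x)}\sigma(x)$. A set of brackets $\mathcal{B}$ is $\sigma$-resolving if for every pair of distinct brackets $B\ne B'$ there is $B_i\in\mathcal{B}$ with $\mathrm{score}_\sigma(B_i,B)\ne\mathrm{score}_\sigma(B_i,B')$ (and analogously for $\mathcal{T}_u,\sigma_u$). *)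

theory Defs
  imports Complex_Main
begin

definition in_nbrs :: "'a rel \<Rightarrow> 'a \<Rightarrow> 'a set" where
  "in_nbrs E v = {u. (u, v) \<in> E}"

definition out_nbrs :: "'a rel \<Rightarrow> 'a \<Rightarrow> 'a set" where
  "out_nbrs E v = {w. (v, w) \<in> E}"

definition single_elim_tournament :: "'a set \<Rightarrow> 'a rel \<Rightarrow> bool" where
  "single_elim_tournament V E \<longleftrightarrow>
     finite V \<and> E \<subseteq> V \<times> V \<and>
     (\<exists>!s. s \<in> V \<and> out_nbrs E s = {}) \<and>
     (\<forall>v\<in>V. out_nbrs E v \<noteq> {} \<longrightarrow> card (out_nbrs E v) = 1) \<and>
     acyclic E \<and>
     (\<forall>v\<in>V. card (in_nbrs E v) \<noteq> 1)"

definition players :: "'a set \<Rightarrow> 'a rel \<Rightarrow> 'a set" where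
  "players V E = {v\<in>V. in_nbrs E v = {}}"

definition matches :: "'a set \<Rightarrow> 'a rel \<Rightarrow> 'a set" where
  "matches V E = V - players V E"

definition Pl :: "'a set \<Rightarrow> 'a rel \<Rightarrow> 'a \<Rightarrow> 'a set" where
  "Pl V E u = {a \<in> players V E. (a, u) \<in> E\<^sup>*}"

text \<open>Vertex and edge set of the sub-tournament T_u.\<close>
definition subV :: "'a set \<Rightarrow> 'a rel \<Rightarrow> 'a \<Rightarrow> 'a set" where
  "subV V E u = {v \<in> V. Pl V E v \<subseteq> Pl V E u}"

definition subE :: "'a set \<Rightarrow> 'a rel \<Rightarrow> 'a \<Rightarrow> 'a rel" where
  "subE V E u = E \<inter> (subV V E u \<times> subV V E u)"

definition is_bracket :: "'a set \<Rightarrow> 'a rel \<Rightarrow> ('a \<Rightarrow> 'a) \<Rightarrow> bool" where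
  "is_bracket V E B \<longleftrightarrow>
     (\<forall>a \<in> players V E. B a = a) \<and>
     (\<forall>x \<in> matches V E. B x \<in> B ` in_nbrs E x)"

definition scoring_system :: "'a set \<Rightarrow> 'a rel \<Rightarrow> ('a \<Rightarrow> real) \<Rightarrow> bool" where
  "scoring_system V E \<sigma> \<longleftrightarrow> (\<forall>x \<in> matches V E. \<sigma> x > 0)"

definition score :: "'a set \<Rightarrow> 'a rel \<Rightarrow> ('a \<Rightarrow> real) \<Rightarrow> ('a \<Rightarrow> 'a) \<Rightarrow> ('a \<Rightarrow> 'a) \<Rightarrow> real" where
  "score V E \<sigma> B B' = (\<Sum>x \<in> {x \<in> matches V E. B x = B' x}. \<sigma> x)"

text \<open>Brackets are functions on V; two brackets are distinct iff they differ somewhere on V.\<close>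
definition resolving :: "'a set \<Rightarrow> 'a rel \<Rightarrow> ('a \<Rightarrow> real) \<Rightarrow> ('a \<Rightarrow> 'a) set \<Rightarrow> bool" where
  "resolving V E \<sigma> \<B> \<longleftrightarrow>
     (\<forall>Bi \<in> \<B>. is_bracket V E Bi) \<and>
     (\<forall>B B'. is_bracket V E B \<longrightarrow> is_bracket V E B' \<longrightarrow> (\<exists>x\<in>V. B x \<noteq> B' x) \<longrightarrow>
        (\<exists>Bi \<in> \<B>. score V E \<sigma> Bi B \<noteq> score V E \<sigma> Bi B'))"

end

theory Submission
  imports Defs
begin

text \<open>
  Suppose \<open>B\<close> and \<open>B'\<close> receive the same score against every \<open>B\<^sub>i\<close>. Outside \<open>\<T>\<^sub>u\<close> every
  \<open>B\<^sub>i\<close> predicts winners from outside \<open>P(u)\<close>, and by (c) \<open>B\<close> and \<open>B'\<close> agree on where such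
  players win; so the scores collected outside \<open>\<T>\<^sub>u\<close> coincide, hence so do the scores in
  \<open>\<T>\<^sub>u\<close>, and (a) forces \<open>B = B'\<close> on \<open>\<T>\<^sub>u\<close>. A match \<open>x\<close> outside \<open>\<T>\<^sub>u\<close> whose winner lies in
  \<open>P(u)\<close> is downstream of \<open>u\<close>, so that winner must also be the winner of \<open>u\<close>; together
  with (c) this gives \<open>B x = B' x\<close> everywhere.
\<close>

lemma single_elim_tournament_single_valued:
  assumes "single_elim_tournament V E"
  shows "single_valued E"
proof (rule single_valuedI)
  fix x y z assume xy: "(x, y) \<in> E" and xz: "(x, z) \<in> E"
  have "x \<in> V" "\<forall>v\<in>V. out_nbrs E v \<noteq> {} \<longrightarrow> card (out_nbrs E v) = 1"
    using assms xy unfolding single_elim_tournament_def by blast+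
  moreover have "y \<in> out_nbrs E x" "z \<in> out_nbrs E x"
    using xy xz by (simp_all add: out_nbrs_def)
  ultimately show "y = z" by (metis card_1_singletonE empty_iff singletonD)
qed

lemma single_elim_tournament_wf:
  assumes "single_elim_tournament V E"
  shows "wf E"
proof (rule finite_acyclic_wf)
  have "finite V" "E \<subseteq> V \<times> V" using assms unfolding single_elim_tournament_def by auto
  then show "finite E" by (meson finite_SigmaI finite_subset)
  show "acyclic E" using assms unfolding single_elim_tournament_def by auto
qed

lemma single_valued_acyclic_common_ancestor:
  assumes sv: "single_valued E" and ac: "acyclic E"
    and "(a, w) \<in> E\<^sup>*" "(a, y) \<in> E\<^sup>*" and wz: "(w, z) \<in> E" and yz: "(y, z) \<in> E"
  shows "w = y"
proof -
  have eq: "p = q" if "(p, q) \<in> E\<^sup>*" "(p, z) \<in> E" "(q, z) \<in> E" for p q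
  proof (rule ccontr)
    assume "p \<noteq> q"
    then obtain p' where "(p, p') \<in> E" "(p', q) \<in> E\<^sup>*"
      using \<open>(p, q) \<in> E\<^sup>*\<close> by (metis converse_rtranclE)
    then have "(z, q) \<in> E\<^sup>*" using single_valuedD[OF sv _ \<open>(p, z) \<in> E\<close>] by metis
    then have "(z, z) \<in> E\<^sup>+" using \<open>(q, z) \<in> E\<close> by simp
    then show False using ac by (simp add: acyclic_def)
  qed
  from single_valued_confluent[OF sv assms(3,4)] show ?thesis
    using eq wz yz by metis
qed

lemma bracket_matchE:
  assumes "is_bracket V E B" "x \<in> matches V E"
  obtains w where "(w, x) \<in> E" "B x = B w"
  using assms by (auto simp: is_bracket_def in_nbrs_def)

lemma bracket_winner_in_Pl:
  assumes T: "single_elim_tournament V E" and B: "is_bracket V E B" and "x \<in> V"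
  shows "B x \<in> Pl V E x"
  using \<open>x \<in> V\<close>
proof (induction x rule: wf_induct_rule[OF single_elim_tournament_wf[OF T]])
  case (1 x)
  show ?case
  proof (cases "x \<in> players V E")
    case True
    then show ?thesis using B by (auto simp: is_bracket_def Pl_def)
  next
    case False
    then have "x \<in> matches V E" using 1 by (auto simp: matches_def)
    then obtain w where w: "(w, x) \<in> E" "B x = B w" by (rule bracket_matchE[OF B])
    then have "w \<in> V" using T by (auto simp: single_elim_tournament_def)
    then have "B w \<in> Pl V E w" using 1 w by auto
    then show ?thesis using w by (auto simp: Pl_def)
  qed
qed

text \<open>A player from \<open>P(u)\<close> can reach a match below \<open>u\<close> only through \<open>u\<close>, since the
  tournament is a tree; so it must have won every match on the way, \<open>u\<close> included.\<close>

lemma bracket_winner_along_path: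
  assumes T: "single_elim_tournament V E" and B: "is_bracket V E B"
    and "(u, y) \<in> E\<^sup>*" and "B y \<in> Pl V E u"
  shows "B y = B u"
  using assms(3,4)
proof (induction rule: rtrancl_induct)
  case base
  then show ?case by simp
next
  case (step y z)
  have "z \<in> V" using T step.hyps(2) by (auto simp: single_elim_tournament_def)
  then have "z \<in> matches V E" using step.hyps(2)
    by (auto simp: matches_def players_def in_nbrs_def)
  then obtain w where w: "(w, z) \<in> E" "B z = B w" by (rule bracket_matchE[OF B])
  have "w \<in> V" using T w(1) by (auto simp: single_elim_tournament_def)
  then have "(B z, w) \<in> E\<^sup>*" using bracket_winner_in_Pl[OF T B] w by (auto simp: Pl_def)
  moreover have "(B z, y) \<in> E\<^sup>*" using step.prems step.hyps(1) by (auto simp: Pl_def)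
  moreover have "acyclic E" using T by (simp add: single_elim_tournament_def)
  ultimately have "w = y"
    using single_valued_acyclic_common_ancestor[OF single_elim_tournament_single_valued[OF T]]
      w(1) step.hyps(2) by blast
  then show ?case using w(2) step.IH step.prems by simp
qed

lemma bracket_winner_outside_subV:
  assumes T: "single_elim_tournament V E" and B: "is_bracket V E B"
    and x: "x \<in> V - subV V E u" and Bx: "B x \<in> Pl V E u"
  shows "B x = B u"
proof -
  have "(B x, x) \<in> E\<^sup>*" "(B x, u) \<in> E\<^sup>*"
    using bracket_winner_in_Pl[OF T B] x Bx by (auto simp: Pl_def)
  moreover have "(x, u) \<notin> E\<^sup>*"
  proof
    assume "(x, u) \<in> E\<^sup>*"
    then have "Pl V E x \<subseteq> Pl V E u" by (auto simp: Pl_def)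
    then show False using x by (auto simp: subV_def)
  qed
  ultimately have "(u, x) \<in> E\<^sup>*"
    using single_valued_confluent[OF single_elim_tournament_single_valued[OF T]] by blast
  then show ?thesis using bracket_winner_along_path[OF T B _ Bx] by simp
qed

lemma in_nbrs_closed_subV:
  assumes T: "single_elim_tournament V E" and "v \<in> subV V E u" "(w, v) \<in> E"
  shows "w \<in> subV V E u"
proof -
  have "Pl V E w \<subseteq> Pl V E v" using assms(3) by (auto simp: Pl_def)
  then show ?thesis using assms by (auto simp: subV_def single_elim_tournament_def)
qed

lemma in_nbrs_subE:
  assumes "single_elim_tournament V E" and "v \<in> subV V E u"
  shows "in_nbrs (subE V E u) v = in_nbrs E v"
  using in_nbrs_closed_subV[OF assms(1)] assms(2) by (auto simp: in_nbrs_def subE_def)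

lemma matches_subE:
  assumes "single_elim_tournament V E"
  shows "matches (subV V E u) (subE V E u) = matches V E \<inter> subV V E u"
  using in_nbrs_subE[OF assms] by (auto simp: matches_def players_def subV_def)

lemma is_bracket_subE:
  assumes T: "single_elim_tournament V E" and "is_bracket V E B"
  shows "is_bracket (subV V E u) (subE V E u) B"
  using assms(2) in_nbrs_subE[OF T] matches_subE[OF T]
  unfolding is_bracket_def players_def by (auto simp: subV_def)

definition same_outside_winners ::
    "'a set \<Rightarrow> 'a rel \<Rightarrow> 'a \<Rightarrow> ('a \<Rightarrow> 'a) \<Rightarrow> ('a \<Rightarrow> 'a) \<Rightarrow> bool" where
  "same_outside_winners V E u B B' \<longleftrightarrow>
     (\<forall>a \<in> players V E - Pl V E u. \<forall>x \<in> matches V E. B x = a \<longleftrightarrow> B' x = a)"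

lemma score_split_subE:
  assumes T: "single_elim_tournament V E"
  shows "score V E \<sigma> Bi C = score (subV V E u) (subE V E u) \<sigma> Bi C
           + (\<Sum>x \<in> {x \<in> matches V E - subV V E u. Bi x = C x}. \<sigma> x)"
proof -
  have fin: "finite (matches V E)"
    using T by (auto simp: single_elim_tournament_def matches_def)
  have "score V E \<sigma> Bi C = sum \<sigma> ({x \<in> matches V E \<inter> subV V E u. Bi x = C x}
                                    \<union> {x \<in> matches V E - subV V E u. Bi x = C x})"
    unfolding score_def by (rule arg_cong[where f = "sum \<sigma>"]) blast
  also have "\<dots> = sum \<sigma> {x \<in> matches V E \<inter> subV V E u. Bi x = C x}
      + sum \<sigma> {x \<in> matches V E - subV V E u. Bi x = C x}"
    by (rule sum.union_disjoint) (auto intro: finite_subset[OF _ fin])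
  finally show ?thesis unfolding score_def matches_subE[OF T] .
qed

lemma score_eq_iff_sub_score_eq:
  assumes T: "single_elim_tournament V E" and Bi: "is_bracket V E Bi"
    and outside: "\<forall>x \<in> matches V E - subV V E u. Bi x \<notin> Pl V E u"
    and same: "same_outside_winners V E u B B'"
  shows "score V E \<sigma> Bi B = score V E \<sigma> Bi B' \<longleftrightarrow>
         score (subV V E u) (subE V E u) \<sigma> Bi B = score (subV V E u) (subE V E u) \<sigma> Bi B'"
proof -
  have "Bi x = B x \<longleftrightarrow> Bi x = B' x" if x: "x \<in> matches V E - subV V E u" for x
  proof -
    have "Bi x \<in> Pl V E x" using bracket_winner_in_Pl[OF T Bi] x by (auto simp: matches_def)
    then have "Bi x \<in> players V E - Pl V E u" using outside x by (auto simp: Pl_def)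
    then show ?thesis using same x unfolding same_outside_winners_def by (metis DiffD1)
  qed
  then have "{x \<in> matches V E - subV V E u. Bi x = B x} =
             {x \<in> matches V E - subV V E u. Bi x = B' x}" by blast
  then show ?thesis using score_split_subE[OF T, where u = u and Bi = Bi] by simp
qed

lemma brackets_eq_if_eq_on_subV:
  assumes T: "single_elim_tournament V E" and u: "u \<in> V"
    and B: "is_bracket V E B" and B': "is_bracket V E B'"
    and sub: "\<forall>x \<in> subV V E u. B x = B' x"
    and same: "same_outside_winners V E u B B'"
    and x: "x \<in> V"
  shows "B x = B' x"
proof (cases "x \<in> subV V E u")
  case True
  then show ?thesis using sub by blast
next
  case outside: False
  show ?thesis
  proof (cases "x \<in> matches V E")
    case False
    then show ?thesis using B B' x by (simp add: is_bracket_def matches_def)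
  next
    case xM: True
    have Pl: "B x \<in> Pl V E x" "B' x \<in> Pl V E x"
      using bracket_winner_in_Pl[OF T] B B' x by auto
    show ?thesis
    proof (cases "B x \<in> Pl V E u \<and> B' x \<in> Pl V E u")
      case True
      moreover have "u \<in> subV V E u" using u by (simp add: subV_def)
      ultimately show ?thesis
        using bracket_winner_outside_subV[OF T] B B' x outside sub by (metis DiffI)
    next
      case False
      then have "B x \<in> players V E - Pl V E u \<or> B' x \<in> players V E - Pl V E u"
        using Pl by (auto simp: Pl_def)
      then show ?thesis using same xM unfolding same_outside_winners_def by metis
    qed
  qed
qed

theorem proposition5p4:
  fixes V :: "'a set" and E :: "'a rel" and \<sigma> :: "'a \<Rightarrow> real"
    and u :: 'a and \<B> :: "('a \<Rightarrow> 'a) set"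
  assumes T: "single_elim_tournament V E"
    and sig: "scoring_system V E \<sigma>"
    and u: "u \<in> V"
    and fin: "finite \<B>"
    and brackets: "\<forall>Bi \<in> \<B>. is_bracket V E Bi"
    and a: "resolving (subV V E u) (subE V E u) \<sigma> \<B>"
    and b: "\<forall>Bi \<in> \<B>. \<forall>x \<in> matches V E - subV V E u. Bi x \<notin> Pl V E u"
    and c: "\<forall>B B'. is_bracket V E B \<longrightarrow> is_bracket V E B' \<longrightarrow>
              (\<forall>Bi \<in> \<B>. score V E \<sigma> Bi B = score V E \<sigma> Bi B') \<longrightarrow>
              (\<forall>a \<in> players V E - Pl V E u. \<forall>x \<in> matches V E. B x = a \<longleftrightarrow> B' x = a)"
  shows "resolving V E \<sigma> \<B>"
  unfolding resolving_def
proof (intro conjI allI impI)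
  show "\<forall>Bi\<in>\<B>. is_bracket V E Bi" by fact
  fix B B'
  assume B: "is_bracket V E B" and B': "is_bracket V E B'" and differ: "\<exists>x\<in>V. B x \<noteq> B' x"
  show "\<exists>Bi\<in>\<B>. score V E \<sigma> Bi B \<noteq> score V E \<sigma> Bi B'"
  proof (rule ccontr)
    assume "\<not> ?thesis"
    then have scores: "\<forall>Bi\<in>\<B>. score V E \<sigma> Bi B = score V E \<sigma> Bi B'" by blast
    then have same: "same_outside_winners V E u B B'"
      using c B B' unfolding same_outside_winners_def by blast
    have "\<forall>Bi\<in>\<B>. score (subV V E u) (subE V E u) \<sigma> Bi B = score (subV V E u) (subE V E u) \<sigma> Bi B'"
      using scores score_eq_iff_sub_score_eq[OF T _ _ same] brackets b by blast
    then have "\<forall>x \<in> subV V E u. B x = B' x"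
      using a is_bracket_subE[OF T] B B' unfolding resolving_def by blast
    then show False
      using brackets_eq_if_eq_on_subV[OF T u B B' _ same] differ by blast
  qed
qed

end
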